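(* Let $u\in[0,2\pi)$ and $v\in[0,\pi)$. Define $$K_1=\cos\tfrac v2\cos\tfrac u2\,\mathbb{1}+\sin\tfrac v2\sin\tfrac u2\,\sigma_3,\qquad K_2=\sin\tfrac v2\cos\tfrac u2\,\sigma_1+i\cos\tfrac v2\sin\tfrac u2\,\sigma_2,$$ where $\sigma_1,\sigma_2,\sigma_3$ are the Pauli matrices. Let $\Phi^*(\sigma)=K_1^\dagger\sigma K_1+K_2^\dagger\sigma K_2$ for Hermitian $2\times2$ matrices $\sigma$. Let $\sigma^A,\sigma^B$ be diagonal Hermitian $2\times 2$ matrices. If $$F=C^Q-\sigma^A\otimes\mathbb{1}_2-\mathbb{1}_2\otimes\sigma^B\ge0,$$ then also $$F^\Phi=C^Q-\Phi^*(\sigma^A)\otimes\mathbb{1}_2-\mathbb{1}_2\otimes\Phi^*(\sigma^B)\ge0.$$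
   Context: Here $C^Q=\tfrac12(\mathbb{1}-S)$ on $\mathbb{C}^2\otimes\mathbb{C}^2$, where $S(|x\rangle|y\rangle)=|y\rangle|x\rangle$ is the swap operator. The operators $K_1,K_2$ satisfy $K_1^\dagger K_1+K_2^\dagger K_2=\mathbb{1}$, so they are the Kraus operators of a single-qubit CPTP map $\Phi(\rho)=K_1\rho K_1^\dagger+K_2\rho K_2^\dagger$, and $\Phi^*$ is its dual map. "$\ge0$" means positive semidefinite. *)

theory Defs
  imports "Jordan_Normal_Form.Schur_Decomposition"
begin

definition hermitian_mat :: "complex mat \<Rightarrow> bool" where
  "hermitian_mat A \<longleftrightarrow> A \<in> carrier_mat (dim_row A) (dim_row A) \<and> mat_adjoint A = A"

definition psd :: "complex mat \<Rightarrow> bool" where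
  "psd A \<longleftrightarrow> hermitian_mat A \<and>
     (\<forall>x \<in> carrier_vec (dim_row A). 0 \<le> Re (conjugate x \<bullet> (A *\<^sub>v x)))"

(* Kronecker/tensor product, basis |i>|j> indexed by i * dim B + j *)
definition kron :: "complex mat \<Rightarrow> complex mat \<Rightarrow> complex mat" where
  "kron A B = mat (dim_row A * dim_row B) (dim_col A * dim_col B)
     (\<lambda>(i, j). A $$ (i div dim_row B, j div dim_col B) * B $$ (i mod dim_row B, j mod dim_col B))"

definition sigma1 :: "complex mat" where
  "sigma1 = mat_of_rows_list 2 [[0, 1], [1, 0]]"
definition sigma2 :: "complex mat" where
  "sigma2 = mat_of_rows_list 2 [[0, -\<i>], [\<i>, 0]]"
definition sigma3 :: "complex mat" where
  "sigma3 = mat_of_rows_list 2 [[1, 0], [0, -1]]"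

(* swap operator on C^2 \<otimes> C^2: S |x>|y> = |y>|x>, basis index 2x+y *)
definition swap_op :: "complex mat" where
  "swap_op = mat 4 4 (\<lambda>(i, j). if i = 2 * (j mod 2) + j div 2 then 1 else 0)"

definition CQ :: "complex mat" where
  "CQ = (1/2 :: complex) \<cdot>\<^sub>m (1\<^sub>m 4 - swap_op)"

definition K1 :: "real \<Rightarrow> real \<Rightarrow> complex mat" where
  "K1 u v = complex_of_real (cos (v/2) * cos (u/2)) \<cdot>\<^sub>m 1\<^sub>m 2
          + complex_of_real (sin (v/2) * sin (u/2)) \<cdot>\<^sub>m sigma3"

definition K2 :: "real \<Rightarrow> real \<Rightarrow> complex mat" where
  "K2 u v = complex_of_real (sin (v/2) * cos (u/2)) \<cdot>\<^sub>m sigma1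
          + (\<i> * complex_of_real (cos (v/2) * sin (u/2))) \<cdot>\<^sub>m sigma2"

definition Phi_dual :: "real \<Rightarrow> real \<Rightarrow> complex mat \<Rightarrow> complex mat" where
  "Phi_dual u v s = mat_adjoint (K1 u v) * s * K1 u v + mat_adjoint (K2 u v) * s * K2 u v"

end

theory Submission
  imports Defs
begin

text \<open>
  On diagonal matrices the dual channel acts as a pair of convex combinations:
  \<open>\<Phi>\<^sup>*(diag(d0, d1)) = diag(X d0 + (1 - X) d1, (1 - Y) d0 + Y d1)\<close> with
  \<open>X = cos\<^sup>2((u - v)/2)\<close> and \<open>Y = cos\<^sup>2((u + v)/2)\<close>.
  For \<open>\<sigma>\<^sup>A = diag(a0, a1)\<close>, \<open>\<sigma>\<^sup>B = diag(b0, b1)\<close> the operator \<open>F\<close> is block diagonal, so it is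
  positive semidefinite iff \<open>a0 + b0 \<le> 0\<close>, \<open>a1 + b1 \<le> 0\<close> and the block
  \<open>[[1/2 - a0 - b1, -1/2], [-1/2, 1/2 - a1 - b0]]\<close> on \<open>span{|01\<rangle>, |10\<rangle>}\<close> is.
  The first two conditions survive convex combination. The new middle block is the combination,
  with weights \<open>XY\<close>, \<open>(1-X)(1-Y)\<close>, \<open>X(1-Y)\<close>, \<open>(1-X)Y\<close>, of the old block, the old block with
  its diagonal entries exchanged, and the blocks with both diagonal entries equal to
  \<open>1/2 - a0 - b0\<close> resp. \<open>1/2 - a1 - b1\<close>; the last two are positive because these entries are
  at least \<open>1/2\<close>.
\<close>

definition mat2 :: "'a \<Rightarrow> 'a \<Rightarrow> 'a \<Rightarrow> 'a \<Rightarrow> 'a mat" where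
  "mat2 a b c d = mat 2 2 (\<lambda>(i, j). if i = 0 then (if j = 0 then a else b) else (if j = 0 then c else d))"

lemma less_2_iff: "(i::nat) < 2 \<longleftrightarrow> i = 0 \<or> i = 1" by auto
lemma less_4_iff: "(i::nat) < 4 \<longleftrightarrow> i = 0 \<or> i = 1 \<or> i = 2 \<or> i = 3" by auto

lemma mat2_dims [simp]: "dim_row (mat2 a b c d) = 2" "dim_col (mat2 a b c d) = 2"
  by (simp_all add: mat2_def)

lemma mat2_index [simp]:
  "mat2 a b c d $$ (0, 0) = a" "mat2 a b c d $$ (0, 1) = b"
  "mat2 a b c d $$ (1, 0) = c" "mat2 a b c d $$ (1, 1) = d"
  by (simp_all add: mat2_def)

lemma mat2_eq_iff [simp]:
  "mat2 a b c d = mat2 a' b' c' d' \<longleftrightarrow> a = a' \<and> b = b' \<and> c = c' \<and> d = d'"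
  by (metis mat2_index)

lemma mat2_of_carrier:
  assumes "A \<in> carrier_mat 2 2"
  shows "A = mat2 (A $$ (0, 0)) (A $$ (0, 1)) (A $$ (1, 0)) (A $$ (1, 1))"
  using assms by (intro eq_matI) (auto simp: mat2_def less_2_iff)

lemma mat2_mult:
  "mat2 a b c d * mat2 a' b' c' d' = mat2 (a*a' + b*c') (a*b' + b*d') (c*a' + d*c') (c*b' + d*d')"
  for a :: "'a :: comm_ring"
  by (rule eq_matI) (auto simp: mat2_def scalar_prod_def less_2_iff numeral_2_eq_2)

lemma mat2_add: "mat2 a b c d + mat2 a' b' c' d' = mat2 (a + a') (b + b') (c + c') (d + d')"
  by (rule eq_matI) (auto simp: mat2_def less_2_iff)

lemma smult_mat2: "k \<cdot>\<^sub>m mat2 a b c d = mat2 (k * a) (k * b) (k * c) (k * d)"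
  by (rule eq_matI) (auto simp: mat2_def less_2_iff)

lemma mat_adjoint_index:
  "A \<in> carrier_mat n m \<Longrightarrow> i < m \<Longrightarrow> j < n \<Longrightarrow> mat_adjoint A $$ (i, j) = cnj (A $$ (j, i))"
  by (simp add: mat_adjoint_def mat_of_rows_def)

lemma mat_adjoint_mat2: "mat_adjoint (mat2 a b c d) = mat2 (cnj a) (cnj c) (cnj b) (cnj d)"
  by (rule eq_matI) (auto simp: mat_adjoint_def mat_of_rows_def mat2_def less_2_iff)

lemma one_mat2: "1\<^sub>m 2 = mat2 1 0 0 1"
  by (rule eq_matI) (auto simp: mat2_def less_2_iff)

lemma pauli_mat2:
  "sigma1 = mat2 0 1 1 0" "sigma2 = mat2 0 (-\<i>) \<i> 0" "sigma3 = mat2 1 0 0 (-1)"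
  by (rule eq_matI; auto simp: mat2_def sigma1_def sigma2_def sigma3_def mat_of_rows_list_def less_2_iff)+

abbreviation rdiag2 :: "real \<Rightarrow> real \<Rightarrow> complex mat" where
  "rdiag2 d0 d1 \<equiv> mat2 (of_real d0) 0 0 (of_real d1)"

lemma diagonal_hermitian_mat2_obtain:
  assumes "A \<in> carrier_mat 2 2" "diagonal_mat A" "hermitian_mat A"
  obtains d0 d1 where "A = rdiag2 d0 d1"
proof
  have "cnj (A $$ (i, i)) = A $$ (i, i)" if "i < 2" for i
    using assms(1,3) that mat_adjoint_index[OF assms(1) that that] by (simp add: hermitian_mat_def)
  then have "cnj (A $$ (0, 0)) = A $$ (0, 0)" "cnj (A $$ (1, 1)) = A $$ (1, 1)" by auto
  moreover have "A $$ (0, 1) = 0" "A $$ (1, 0) = 0"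
    using assms(1,2) by (auto simp: diagonal_mat_def)
  ultimately show "A = rdiag2 (Re (A $$ (0, 0))) (Re (A $$ (1, 1)))"
    by (subst mat2_of_carrier[OF assms(1)]) (simp add: complex_eq_iff)
qed

lemma K1_mat2: "K1 u v = rdiag2 (cos ((u - v)/2)) (cos ((u + v)/2))"
  unfolding diff_divide_distrib add_divide_distrib
  by (simp add: K1_def pauli_mat2 one_mat2 smult_mat2 mat2_add cos_diff cos_add algebra_simps)

lemma K2_mat2: "K2 u v = mat2 0 (of_real (sin ((u + v)/2))) (- of_real (sin ((u - v)/2))) 0"
  unfolding diff_divide_distrib add_divide_distrib
  by (simp add: K2_def pauli_mat2 smult_mat2 mat2_add sin_diff sin_add algebra_simps)

lemma Phi_dual_rdiag2:
  "Phi_dual u v (rdiag2 d0 d1) =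
     rdiag2 (cos ((u - v)/2)^2 * d0 + sin ((u - v)/2)^2 * d1)
            (sin ((u + v)/2)^2 * d0 + cos ((u + v)/2)^2 * d1)"
  by (simp add: Phi_dual_def K1_mat2 K2_mat2 mat_adjoint_mat2 mat2_mult mat2_add
      power2_eq_square algebra_simps)

definition F_diag :: "real \<Rightarrow> real \<Rightarrow> real \<Rightarrow> real \<Rightarrow> complex mat" where
  "F_diag a0 a1 b0 b1 = mat 4 4 (\<lambda>(i, j). of_real
     (if i = j then [- a0 - b0, 1/2 - a0 - b1, 1/2 - a1 - b0, - a1 - b1] ! i
      else if (i, j) = (1, 2) \<or> (i, j) = (2, 1) then - 1/2 else 0))"

lemma CQ_minus_kron_rdiag2:
  "CQ - kron (rdiag2 a0 a1) (1\<^sub>m 2) - kron (1\<^sub>m 2) (rdiag2 b0 b1) = F_diag a0 a1 b0 b1"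
proof (rule eq_matI)
  fix i j assume "i < dim_row (F_diag a0 a1 b0 b1)" "j < dim_col (F_diag a0 a1 b0 b1)"
  then have "i < 4" "j < 4" by (simp_all add: F_diag_def)
  then show "(CQ - kron (rdiag2 a0 a1) (1\<^sub>m 2) - kron (1\<^sub>m 2) (rdiag2 b0 b1)) $$ (i, j)
      = F_diag a0 a1 b0 b1 $$ (i, j)"
    unfolding less_4_iff
    by (elim disjE; simp add: CQ_def swap_op_def kron_def mat2_def F_diag_def)
qed (simp_all add: CQ_def swap_op_def kron_def F_diag_def)

lemma hermitian_F_diag: "hermitian_mat (F_diag a0 a1 b0 b1)"
  unfolding hermitian_mat_def
  by (auto simp: F_diag_def mat_adjoint_def mat_of_rows_def)

lemma quadratic_form_F_diag:
  assumes "x \<in> carrier_vec 4"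
  shows "Re (conjugate x \<bullet> (F_diag a0 a1 b0 b1 *\<^sub>v x)) =
      - (a0 + b0) * (Re (x $ 0)^2 + Im (x $ 0)^2)
      + (1/2 - a0 - b1) * (Re (x $ 1)^2 + Im (x $ 1)^2)
      + (1/2 - a1 - b0) * (Re (x $ 2)^2 + Im (x $ 2)^2)
      - (a1 + b1) * (Re (x $ 3)^2 + Im (x $ 3)^2)
      - (Re (x $ 1) * Re (x $ 2) + Im (x $ 1) * Im (x $ 2))"
proof -
  have "conjugate x \<bullet> (F_diag a0 a1 b0 b1 *\<^sub>v x) =
      (\<Sum>i<4. cnj (x $ i) * (\<Sum>j<4. F_diag a0 a1 b0 b1 $$ (i, j) * x $ j))"
    using assms by (simp add: F_diag_def scalar_prod_def mult_mat_vec_def lessThan_atLeast0)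
  also have "\<dots> = cnj (x $ 0) * (of_real (- a0 - b0) * x $ 0)
      + cnj (x $ 1) * (of_real (1/2 - a0 - b1) * x $ 1 - x $ 2 / 2)
      + cnj (x $ 2) * (of_real (1/2 - a1 - b0) * x $ 2 - x $ 1 / 2)
      + cnj (x $ 3) * (of_real (- a1 - b1) * x $ 3)"
    by (simp add: eval_nat_numeral F_diag_def)
  finally have expand: "conjugate x \<bullet> (F_diag a0 a1 b0 b1 *\<^sub>v x) = \<dots>" .
  show ?thesis
    unfolding expand by (simp add: field_simps power2_eq_square)
qed

definition F_diag_psd_cond :: "real \<Rightarrow> real \<Rightarrow> real \<Rightarrow> real \<Rightarrow> bool" where
  "F_diag_psd_cond a0 a1 b0 b1 \<longleftrightarrow> a0 + b0 \<le> 0 \<and> a1 + b1 \<le> 0 \<and>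
     (\<forall>r s. r * s \<le> (1/2 - a0 - b1) * r^2 + (1/2 - a1 - b0) * s^2)"

lemma psd_F_diag_iff: "psd (F_diag a0 a1 b0 b1) \<longleftrightarrow> F_diag_psd_cond a0 a1 b0 b1"
proof
  assume "psd (F_diag a0 a1 b0 b1)"
  then have form_nonneg: "0 \<le> Re (conjugate x \<bullet> (F_diag a0 a1 b0 b1 *\<^sub>v x))"
    if "x \<in> carrier_vec 4" for x
    using that by (simp add: psd_def F_diag_def)
  have "a0 + b0 \<le> 0"
    using form_nonneg[of "vec 4 (\<lambda>i. if i = 0 then 1 else 0)"] by (simp add: quadratic_form_F_diag)
  moreover have "a1 + b1 \<le> 0"
    using form_nonneg[of "vec 4 (\<lambda>i. if i = 3 then 1 else 0)"] by (simp add: quadratic_form_F_diag)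
  moreover have "r * s \<le> (1/2 - a0 - b1) * r^2 + (1/2 - a1 - b0) * s^2" for r s
    using form_nonneg[of "vec 4 (\<lambda>i. if i = 1 then of_real r else if i = 2 then of_real s else 0)"]
    by (simp add: quadratic_form_F_diag)
  ultimately show "F_diag_psd_cond a0 a1 b0 b1"
    by (simp add: F_diag_psd_cond_def)
next
  assume cond: "F_diag_psd_cond a0 a1 b0 b1"
  then have cross_bound: "r * s \<le> (1/2 - a0 - b1) * r^2 + (1/2 - a1 - b0) * s^2" for r s
    by (simp add: F_diag_psd_cond_def)
  have "0 \<le> Re (conjugate x \<bullet> (F_diag a0 a1 b0 b1 *\<^sub>v x))" if "x \<in> carrier_vec 4" for x
  proof -
    have "0 \<le> - (a0 + b0) * (Re (x $ 0)^2 + Im (x $ 0)^2)"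
      "0 \<le> - (a1 + b1) * (Re (x $ 3)^2 + Im (x $ 3)^2)"
      using cond by (simp_all add: F_diag_psd_cond_def)
    then show ?thesis
      unfolding quadratic_form_F_diag[OF that]
      using cross_bound[of "Re (x $ 1)" "Re (x $ 2)"] cross_bound[of "Im (x $ 1)" "Im (x $ 2)"]
      by (simp add: algebra_simps)
  qed
  then show "psd (F_diag a0 a1 b0 b1)"
    by (simp add: psd_def hermitian_F_diag) (simp add: F_diag_def)
qed

lemma mult_le_scaled_sum_squares:
  fixes r s p :: real
  assumes "1/2 \<le> p"
  shows "r * s \<le> p * (r^2 + s^2)"
proof -
  have "r * s \<le> 1/2 * (r^2 + s^2)"
    using sum_squares_ge_zero[of "r - s" 0] by (simp add: power2_eq_square algebra_simps)
  also have "\<dots> \<le> p * (r^2 + s^2)"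
    using assms by (intro mult_right_mono) simp_all
  finally show ?thesis .
qed

lemma F_diag_psd_cond_mix:
  assumes cond: "F_diag_psd_cond a0 a1 b0 b1"
    and X: "0 \<le> X" "X \<le> 1" and Y: "0 \<le> Y" "Y \<le> 1"
  shows "F_diag_psd_cond (X * a0 + (1 - X) * a1) ((1 - Y) * a0 + Y * a1)
                       (X * b0 + (1 - X) * b1) ((1 - Y) * b0 + Y * b1)"
proof -
  from cond have d0: "a0 + b0 \<le> 0" and d1: "a1 + b1 \<le> 0"
    and cross: "\<And>r s. r * s \<le> (1/2 - a0 - b1) * r^2 + (1/2 - a1 - b0) * s^2"
    by (simp_all add: F_diag_psd_cond_def)
  have "0 \<le> X * (- (a0 + b0)) + (1 - X) * (- (a1 + b1))"
    "0 \<le> (1 - Y) * (- (a0 + b0)) + Y * (- (a1 + b1))"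
    using X Y d0 d1 by (intro add_nonneg_nonneg mult_nonneg_nonneg; simp)+
  moreover have "r * s \<le> (1/2 - (X * a0 + (1 - X) * a1) - ((1 - Y) * b0 + Y * b1)) * r^2
      + (1/2 - ((1 - Y) * a0 + Y * a1) - (X * b0 + (1 - X) * b1)) * s^2" for r s
  proof -
    let ?Q = "\<lambda>p q. p * r^2 + q * s^2 - r * s"
    have "0 \<le> ?Q (1/2 - a0 - b1) (1/2 - a1 - b0)" "0 \<le> ?Q (1/2 - a1 - b0) (1/2 - a0 - b1)"
      using cross[of r s] cross[of s r] by (simp_all add: mult.commute)
    moreover have "0 \<le> ?Q (1/2 - a0 - b0) (1/2 - a0 - b0)" "0 \<le> ?Q (1/2 - a1 - b1) (1/2 - a1 - b1)"
      using mult_le_scaled_sum_squares[of "1/2 - a0 - b0" r s]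
        mult_le_scaled_sum_squares[of "1/2 - a1 - b1" r s] d0 d1
      by (simp_all add: algebra_simps)
    ultimately have "0 \<le> (X * Y) * ?Q (1/2 - a0 - b1) (1/2 - a1 - b0)
        + ((1 - X) * (1 - Y)) * ?Q (1/2 - a1 - b0) (1/2 - a0 - b1)
        + (X * (1 - Y)) * ?Q (1/2 - a0 - b0) (1/2 - a0 - b0)
        + ((1 - X) * Y) * ?Q (1/2 - a1 - b1) (1/2 - a1 - b1)"
      using X Y by (intro add_nonneg_nonneg mult_nonneg_nonneg) simp_all
    then show ?thesis
      by (simp add: field_simps power2_eq_square)
  qed
  ultimately show ?thesis
    by (simp add: F_diag_psd_cond_def algebra_simps)
qed

theorem lemma5p1:
  fixes u v :: real and sA sB :: "complex mat"
  assumes "0 \<le> u" "u < 2 * pi" "0 \<le> v" "v < pi"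
    and "sA \<in> carrier_mat 2 2" "diagonal_mat sA" "hermitian_mat sA"
    and "sB \<in> carrier_mat 2 2" "diagonal_mat sB" "hermitian_mat sB"
    and "psd (CQ - kron sA (1\<^sub>m 2) - kron (1\<^sub>m 2) sB)"
  shows "psd (CQ - kron (Phi_dual u v sA) (1\<^sub>m 2) - kron (1\<^sub>m 2) (Phi_dual u v sB))"
proof -
  obtain a0 a1 where sA: "sA = rdiag2 a0 a1"
    using diagonal_hermitian_mat2_obtain assms(5-7) by blast
  obtain b0 b1 where sB: "sB = rdiag2 b0 b1"
    using diagonal_hermitian_mat2_obtain assms(8-10) by blast
  define X where "X = cos ((u - v)/2)^2"
  define Y where "Y = cos ((u + v)/2)^2"
  have sin_sq: "sin ((u - v)/2)^2 = 1 - X" "sin ((u + v)/2)^2 = 1 - Y"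
    by (simp_all add: X_def Y_def sin_squared_eq)
  have "0 \<le> X" "X \<le> 1" "0 \<le> Y" "Y \<le> 1"
    by (simp_all add: X_def Y_def abs_square_le_1)
  moreover have "F_diag_psd_cond a0 a1 b0 b1"
    using assms(11) by (simp add: sA sB CQ_minus_kron_rdiag2 psd_F_diag_iff)
  ultimately have "F_diag_psd_cond (X * a0 + (1 - X) * a1) ((1 - Y) * a0 + Y * a1)
                                 (X * b0 + (1 - X) * b1) ((1 - Y) * b0 + Y * b1)"
    by (intro F_diag_psd_cond_mix)
  then show ?thesis
    unfolding sA sB Phi_dual_rdiag2 sin_sq X_def[symmetric] Y_def[symmetric]
      CQ_minus_kron_rdiag2 psd_F_diag_iff .
qed

end
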